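(* Let $L$ be a real Galois extension of $\mathbb{Q}$ with Galois group isomorphic to $\mathbb{Z}/2\mathbb{Z}\times\mathbb{Z}/2\mathbb{Z}$, let $u_1,u_2,u_3>1$ be the fundamental units of its three quadratic subfields, ordered so that $u_1<u_2<u_3$, and let $E=\{u_1^{m_1}u_2^{m_2}u_3^{m_3}:m_i\in\mathbb{Z}\}$. Put $X_1=\log u_2\log u_3$, $X_2=\log u_1\log u_3$, $X_3=\log u_1\log u_2$. For integers $n_1,n_2,n_3$ let $w=n_1\operatorname{LOG}(u_2)\wedge\operatorname{LOG}(u_3)+n_2\operatorname{LOG}(u_1)\wedge\operatorname{LOG}(u_3)+n_3\operatorname{LOG}(u_1)\wedge\operatorname{LOG}(u_2)$. Then $$\|w\|_1=4\big(\max\{|n_2X_2|,|n_3X_3|\}+\max\{|n_1X_1|,|n_2X_2|\}+\max\{|n_1X_1|,|n_3X_3|\}\big)\ge 8\max\{|n_1X_1|,|n_2X_2|,|n_3X_3|\},$$ and consequently every nonzero $w\in\bigwedge^2\operatorname{LOG}(E)$ satisfies $\|w\|_1\ge 8\log(u_1)\log(u_2)$.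
   Context: For a totally real number field $L$, $\operatorname{LOG}:\mathcal{O}_L^*\to\mathbb{R}^{\mathcal{A}_L}$, $\operatorname{LOG}(\gamma)=(\log|\tau(\gamma)|)_\tau$, indexed by the real embeddings $\tau$ of $L$. With the standard orthonormal basis $\{\delta^v\}$ of $\mathbb{R}^{\mathcal{A}_L}$ and $\delta^I=\delta^{v_1}\wedge\cdots\wedge\delta^{v_j}$ for $j$-subsets $I$, the 1-norm of $w=\sum_I c_I\delta^I\in\bigwedge^j\mathbb{R}^{\mathcal{A}_L}$ is $\|w\|_1=\sum_I|c_I|$. For a subgroup $H\subseteq\mathcal{O}_L^*$, $\bigwedge^2\operatorname{LOG}(H)$ is the subgroup generated by all $\operatorname{LOG}(a)\wedge\operatorname{LOG}(b)$ with $a,b\in H$. *)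

theory Defs
  imports Complex_Main "HOL-Computational_Algebra.Polynomial" "HOL-Algebra.Elementary_Groups"
begin

definition real_subfield :: "real set \<Rightarrow> bool" where
  "real_subfield K \<longleftrightarrow> 0 \<in> K \<and> 1 \<in> K \<and>
     (\<forall>x\<in>K. \<forall>y\<in>K. x + y \<in> K \<and> x * y \<in> K) \<and>
     (\<forall>x\<in>K. - x \<in> K \<and> inverse x \<in> K)"

definition field_auts :: "real set \<Rightarrow> (real \<Rightarrow> real) set" where
  "field_auts L = {\<sigma>. bij_betw \<sigma> L L \<and> (\<forall>x. x \<notin> L \<longrightarrow> \<sigma> x = 0) \<and> \<sigma> 1 = 1 \<and>
     (\<forall>x\<in>L. \<forall>y\<in>L. \<sigma> (x + y) = \<sigma> x + \<sigma> y \<and> \<sigma> (x * y) = \<sigma> x * \<sigma> y)}"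

text \<open>The automorphism group Aut(L) (= Aut(L/Q), since every automorphism fixes Q).\<close>
definition aut_group :: "real set \<Rightarrow> (real \<Rightarrow> real) monoid" where
  "aut_group L = \<lparr>carrier = field_auts L, mult = (\<lambda>\<sigma> \<tau> x. if x \<in> L then \<sigma> (\<tau> x) else 0),
                  one = (\<lambda>x. if x \<in> L then x else 0)\<rparr>"

definition galois_over_Q :: "real set \<Rightarrow> bool" where
  "galois_over_Q L \<longleftrightarrow> {x \<in> L. \<forall>\<sigma>\<in>field_auts L. \<sigma> x = x} = \<rat>"

definition real_embeddings :: "real set \<Rightarrow> (real \<Rightarrow> real) set" where
  "real_embeddings L = {\<tau>. (\<forall>x. x \<notin> L \<longrightarrow> \<tau> x = 0) \<and> \<tau> 1 = 1 \<and>
     (\<forall>x\<in>L. \<forall>y\<in>L. \<tau> (x + y) = \<tau> x + \<tau> y \<and> \<tau> (x * y) = \<tau> x * \<tau> y)}"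

text \<open>Quadratic subfield: subfield of L of degree 2 over Q, i.e. with a Q-basis {1, alpha}.\<close>
definition quadratic_subfield :: "real set \<Rightarrow> real set \<Rightarrow> bool" where
  "quadratic_subfield L K \<longleftrightarrow> real_subfield K \<and> K \<subseteq> L \<and>
     (\<exists>\<alpha>\<in>K. \<forall>x\<in>K. \<exists>!pq. fst pq \<in> \<rat> \<and> snd pq \<in> \<rat> \<and> x = fst pq + snd pq * \<alpha>)"

definition algebraic_integer :: "real \<Rightarrow> bool" where
  "algebraic_integer x \<longleftrightarrow> (\<exists>p :: int poly. lead_coeff p = 1 \<and> poly (map_poly of_int p) x = 0)"

definition int_units :: "real set \<Rightarrow> real set" where
  "int_units K = {x \<in> K. x \<noteq> 0 \<and> algebraic_integer x \<and> algebraic_integer (inverse x)}"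

definition fundamental_unit :: "real set \<Rightarrow> real \<Rightarrow> bool" where
  "fundamental_unit K u \<longleftrightarrow> u \<in> int_units K \<and> u > 1 \<and>
     (\<forall>v\<in>int_units K. \<exists>s::real. \<exists>m::int. (s = 1 \<or> s = -1) \<and> v = s * u powi m)"

definition LOG :: "real set \<Rightarrow> real \<Rightarrow> (real \<Rightarrow> real) \<Rightarrow> real" where
  "LOG L \<gamma> = (\<lambda>\<tau>. if \<tau> \<in> real_embeddings L then ln \<bar>\<tau> \<gamma>\<bar> else 0)"

text \<open>Bivectors in wedge^2 R^A are represented by their antisymmetric coefficient
  function B, with c_{v,w} = B v w the coefficient of delta^v wedge delta^w.\<close>
definition wedge :: "('a \<Rightarrow> real) \<Rightarrow> ('a \<Rightarrow> real) \<Rightarrow> 'a \<Rightarrow> 'a \<Rightarrow> real" where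
  "wedge x y = (\<lambda>v w. x v * y w - x w * y v)"

text \<open>1-norm: sum over 2-subsets {v,w} of |c_{v,w}|, i.e. half the sum over ordered pairs
  (the diagonal coefficients vanish).\<close>
definition norm1 :: "'a set \<Rightarrow> ('a \<Rightarrow> 'a \<Rightarrow> real) \<Rightarrow> real" where
  "norm1 A B = (\<Sum>I\<in>{I. I \<subseteq> A \<and> card I = 2}. \<bar>B (SOME v. v \<in> I) (SOME w. w \<in> I \<and> w \<noteq> (SOME v. v \<in> I))\<bar>)"

definition wedge2_LOG :: "real set \<Rightarrow> real set \<Rightarrow> ((real \<Rightarrow> real) \<Rightarrow> (real \<Rightarrow> real) \<Rightarrow> real) set" where
  "wedge2_LOG L H = {(\<lambda>v w. \<Sum>i<n. of_int (k i) * wedge (LOG L (a i)) (LOG L (b i)) v w)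
      | (n::nat) k a b. \<forall>i<n. a i \<in> H \<and> b i \<in> H}"

end

theory Submission
  imports Defs
begin

(* Each quadratic subfield is Q(d_i) with d_i^2 rational, so every real embedding of L sends
   d_i to +d_i or -d_i. The numbers d_1, d_2, d_3 and their pairwise products are irrational with
   rational squares, hence have trace zero; this forces the three nontrivial automorphisms to act
   on (d_1, d_2, d_3) by the signs (+,-,-), (-,+,-), (-,-,+). Then d_1 d_2 d_3 is rational and the
   trace gives L = Q + Q d_1 + Q d_2 + Q d_3, so the four automorphisms are all real embeddings.
   An embedding negating d_i sends the fundamental unit u_i to a conjugate of absolute value 1/u_i
   (otherwise u_i^2 would be rational), so LOG(u_1), LOG(u_2), LOG(u_3) carry the same sign
   patterns with entries log u_i. The six coordinates of w are then 2(+-a +- b) for the pairs among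
   a = n_1 X_1, b = n_2 X_2, c = n_3 X_3, and |a + b| + |a - b| = 2 max(|a|, |b|) gives the norm.
   Every element of the wedge square of LOG(E) is such a w with integer n_i, and
   X_1, X_2 >= X_3 = log u_1 log u_2 gives the lower bound. *)

section \<open>Subfields and real embeddings\<close>

context
  fixes K :: "real set"
  assumes K: "real_subfield K"
begin

lemma real_subfield_zero: "0 \<in> K"
  and real_subfield_one: "1 \<in> K"
  and real_subfield_add: "x \<in> K \<Longrightarrow> y \<in> K \<Longrightarrow> x + y \<in> K"
  and real_subfield_mult: "x \<in> K \<Longrightarrow> y \<in> K \<Longrightarrow> x * y \<in> K"
  and real_subfield_uminus: "x \<in> K \<Longrightarrow> - x \<in> K"
  and real_subfield_inverse: "x \<in> K \<Longrightarrow> inverse x \<in> K"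
  using K by (auto simp: real_subfield_def)

lemma real_subfield_divide: "x \<in> K \<Longrightarrow> y \<in> K \<Longrightarrow> x / y \<in> K"
  using real_subfield_mult[of x "inverse y"] real_subfield_inverse[of y] by (simp add: divide_inverse)

lemma real_subfield_of_nat: "real n \<in> K"
  by (induction n) (auto intro: real_subfield_add real_subfield_zero real_subfield_one)

lemma real_subfield_of_int: "real_of_int n \<in> K"
  using real_subfield_of_nat[of "nat n"] real_subfield_uminus[OF real_subfield_of_nat[of "nat (- n)"]]
  by (cases "n \<ge> 0") auto

lemma Rats_subset_real_subfield: "\<rat> \<subseteq> K"
  by (auto elim!: Rats_cases' intro: real_subfield_divide real_subfield_of_int)

lemma real_subfield_power: "x \<in> K \<Longrightarrow> x ^ n \<in> K"
  by (induction n) (auto intro: real_subfield_mult real_subfield_one)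

lemma real_subfield_powi: "x \<in> K \<Longrightarrow> x powi m \<in> K"
  by (simp add: power_int_def real_subfield_power real_subfield_inverse)

lemma real_subfield_sum: "(\<And>i. i \<in> S \<Longrightarrow> f i \<in> K) \<Longrightarrow> sum f S \<in> K"
  by (induction S rule: infinite_finite_induct) (auto intro: real_subfield_add real_subfield_zero)

end

lemma real_embedding_add: "\<tau> \<in> real_embeddings L \<Longrightarrow> x \<in> L \<Longrightarrow> y \<in> L \<Longrightarrow> \<tau> (x + y) = \<tau> x + \<tau> y"
  and real_embedding_mult: "\<tau> \<in> real_embeddings L \<Longrightarrow> x \<in> L \<Longrightarrow> y \<in> L \<Longrightarrow> \<tau> (x * y) = \<tau> x * \<tau> y"
  and real_embedding_one: "\<tau> \<in> real_embeddings L \<Longrightarrow> \<tau> 1 = 1"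
  and real_embedding_outside: "\<tau> \<in> real_embeddings L \<Longrightarrow> x \<notin> L \<Longrightarrow> \<tau> x = 0"
  by (auto simp: real_embeddings_def)

context
  fixes L :: "real set" and \<tau> :: "real \<Rightarrow> real"
  assumes L: "real_subfield L" and \<tau>: "\<tau> \<in> real_embeddings L"
begin

lemma real_embedding_zero: "\<tau> 0 = 0"
  using real_embedding_add[OF \<tau> real_subfield_zero[OF L] real_subfield_zero[OF L]] by simp

lemma real_embedding_uminus: "x \<in> L \<Longrightarrow> \<tau> (- x) = - \<tau> x"
  using real_embedding_add[OF \<tau>, of x "- x"] real_subfield_uminus[OF L, of x] real_embedding_zero
  by simp

lemma real_embedding_inverse: "x \<in> L \<Longrightarrow> \<tau> (inverse x) = inverse (\<tau> x)"
proof (cases "x = 0")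
  case True
  then show ?thesis using real_embedding_zero by simp
next
  case False
  assume x: "x \<in> L"
  have "\<tau> x * \<tau> (inverse x) = 1"
    using real_embedding_mult[OF \<tau> x real_subfield_inverse[OF L x]] False real_embedding_one[OF \<tau>]
    by simp
  then show ?thesis by (simp add: inverse_unique)
qed

lemma real_embedding_nonzero: "x \<in> L \<Longrightarrow> x \<noteq> 0 \<Longrightarrow> \<tau> x \<noteq> 0"
  using real_embedding_mult[OF \<tau> _ real_subfield_inverse[OF L], of x x] real_embedding_one[OF \<tau>]
  by auto

lemma real_embedding_divide: "x \<in> L \<Longrightarrow> y \<in> L \<Longrightarrow> \<tau> (x / y) = \<tau> x / \<tau> y"
  using real_embedding_mult[OF \<tau>, of x "inverse y"] real_subfield_inverse[OF L, of y]
    real_embedding_inverse[of y]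
  by (simp add: divide_inverse)

lemma real_embedding_of_nat: "\<tau> (real n) = real n"
  by (induction n)
    (simp_all add: real_embedding_zero real_embedding_one[OF \<tau>]
      real_embedding_add[OF \<tau> real_subfield_one[OF L] real_subfield_of_nat[OF L], simplified add.commute])

lemma real_embedding_of_int: "\<tau> (real_of_int n) = real_of_int n"
  using real_embedding_of_nat[of "nat n"]
    real_embedding_uminus[OF real_subfield_of_nat[OF L], of "nat (- n)"] real_embedding_of_nat[of "nat (- n)"]
  by (cases "n \<ge> 0") auto

lemma real_embedding_Rats: "q \<in> \<rat> \<Longrightarrow> \<tau> q = q"
  by (auto elim!: Rats_cases'
      simp: real_embedding_divide real_subfield_of_int[OF L] real_embedding_of_int)

lemma real_embedding_power: "x \<in> L \<Longrightarrow> \<tau> (x ^ n) = \<tau> x ^ n"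
  by (induction n)
    (simp_all add: real_embedding_one[OF \<tau>] real_embedding_mult[OF \<tau>] real_subfield_power[OF L])

lemma real_embedding_powi: "x \<in> L \<Longrightarrow> \<tau> (x powi m) = \<tau> x powi m"
  by (simp add: power_int_def real_embedding_power real_embedding_inverse real_subfield_inverse[OF L])

lemma real_embedding_sum: "(\<And>i. i \<in> S \<Longrightarrow> f i \<in> L) \<Longrightarrow> \<tau> (sum f S) = (\<Sum>i\<in>S. \<tau> (f i))"
  by (induction S rule: infinite_finite_induct)
    (simp_all add: real_embedding_zero real_embedding_add[OF \<tau>] real_subfield_sum[OF L])

lemma real_embedding_poly:
  assumes x: "x \<in> L"
  shows "\<tau> (poly (map_poly of_int p) x) = poly (map_poly of_int p) (\<tau> x)"
proof -
  have "\<tau> (\<Sum>i\<le>degree (map_poly real_of_int p). of_int (coeff p i) * x ^ i)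
      = (\<Sum>i\<le>degree (map_poly real_of_int p). of_int (coeff p i) * \<tau> x ^ i)"
    using x by (simp add: real_embedding_sum real_embedding_mult[OF \<tau>] real_embedding_of_int
        real_embedding_power real_subfield_mult[OF L] real_subfield_of_int[OF L] real_subfield_power[OF L])
  then show ?thesis by (simp add: poly_altdef coeff_map_poly)
qed

lemma algebraic_integer_real_embedding: "x \<in> L \<Longrightarrow> algebraic_integer x \<Longrightarrow> algebraic_integer (\<tau> x)"
  unfolding algebraic_integer_def using real_embedding_poly real_embedding_zero by metis

end

lemma field_auts_subset_real_embeddings: "field_auts L \<subseteq> real_embeddings L"
  by (auto simp: field_auts_def real_embeddings_def)

section \<open>Quadratic subfields\<close>

definition rat_span :: "real \<Rightarrow> real set" where
  "rat_span \<delta> = {p + q * \<delta> | p q. p \<in> \<rat> \<and> q \<in> \<rat>}"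

lemma rat_span_memI: "p \<in> \<rat> \<Longrightarrow> q \<in> \<rat> \<Longrightarrow> x = p + q * \<delta> \<Longrightarrow> x \<in> rat_span \<delta>"
  unfolding rat_span_def by blast

lemma rat_span_memE:
  assumes "x \<in> rat_span \<delta>"
  obtains p q where "p \<in> \<rat>" "q \<in> \<rat>" "x = p + q * \<delta>"
  using assms unfolding rat_span_def by blast

lemma self_in_rat_span: "\<delta> \<in> rat_span \<delta>"
  by (rule rat_span_memI[of 0 1]) simp_all

lemma rat_span_subset:
  assumes "\<delta> \<in> rat_span \<delta>'"
  shows "rat_span \<delta> \<subseteq> rat_span \<delta>'"
proof
  fix x assume "x \<in> rat_span \<delta>"
  then obtain p q where pq: "p \<in> \<rat>" "q \<in> \<rat>" "x = p + q * \<delta>"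
    by (rule rat_span_memE)
  obtain a b where ab: "a \<in> \<rat>" "b \<in> \<rat>" "\<delta> = a + b * \<delta>'"
    using assms by (rule rat_span_memE)
  show "x \<in> rat_span \<delta>'"
    by (rule rat_span_memI[of "p + q * a" "q * b"]) (use pq ab in \<open>simp_all add: algebra_simps\<close>)
qed

lemma rat_span_scale:
  assumes "c \<in> \<rat>" "c \<noteq> 0"
  shows "rat_span (c * \<delta>) = rat_span \<delta>"
proof (intro equalityI rat_span_subset)
  show "c * \<delta> \<in> rat_span \<delta>"
    by (rule rat_span_memI[of 0 c]) (use assms in simp_all)
  show "\<delta> \<in> rat_span (c * \<delta>)"
    by (rule rat_span_memI[of 0 "inverse c"]) (use assms in simp_all)
qed

lemma rat_span_eq_if_mult_Rats:
  assumes "d1 * d1 \<in> \<rat>" "d1 \<noteq> 0" "d2 \<noteq> 0" "d1 * d2 \<in> \<rat>"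
  shows "rat_span d1 = rat_span d2"
proof -
  define c where "c = (d1 * d2) / (d1 * d1)"
  have "c \<in> \<rat>"
    unfolding c_def by (rule Rats_divide) (fact assms(4), fact assms(1))
  moreover have "d2 = c * d1" "c \<noteq> 0"
    using assms by (simp_all add: c_def field_simps)
  ultimately show ?thesis
    using rat_span_scale[of c d1] by simp
qed

lemma quadratic_subfield_subset: "quadratic_subfield L K \<Longrightarrow> K \<subseteq> L"
  by (simp add: quadratic_subfield_def)

text \<open>Completing the square turns a basis \<open>{1, \<alpha>}\<close> into one whose second element has rational square.\<close>
lemma quadratic_subfield_eq_rat_span:
  assumes "quadratic_subfield L K"
  obtains \<delta> where "\<delta> \<notin> \<rat>" "\<delta> * \<delta> \<in> \<rat>" "K = rat_span \<delta>"
proof -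
  have K: "real_subfield K" using assms by (simp add: quadratic_subfield_def)
  obtain \<alpha> where \<alpha>: "\<alpha> \<in> K"
    and "\<forall>x\<in>K. \<exists>!pq. fst pq \<in> \<rat> \<and> snd pq \<in> \<rat> \<and> x = fst pq + snd pq * \<alpha>"
    using assms unfolding quadratic_subfield_def by blast
  note rep = this(2)[rule_format]
  have \<alpha>_irrational: "\<alpha> \<notin> \<rat>"
  proof
    assume "\<alpha> \<in> \<rat>"
    have "\<exists>\<^sub>\<le>\<^sub>1pq. fst pq \<in> \<rat> \<and> snd pq \<in> \<rat> \<and> (0::real) = fst pq + snd pq * \<alpha>"
      using rep[OF real_subfield_zero[OF K]] by (simp add: ex1_iff_ex_Uniq)
    then have "(0, 0) = (\<alpha>, -1 :: real)"
      by (rule Uniq_D) (use \<open>\<alpha> \<in> \<rat>\<close> in simp_all)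
    then show False by simp
  qed
  obtain r s where rs: "r \<in> \<rat>" "s \<in> \<rat>" "\<alpha> * \<alpha> = r + s * \<alpha>"
    using ex1_implies_ex[OF rep[OF real_subfield_mult[OF K \<alpha> \<alpha>]]] by auto
  define \<delta> where "\<delta> = 2 * \<alpha> - s"
  have "\<delta> * \<delta> = 4 * r + s * s"
    using rs(3) by (simp add: \<delta>_def algebra_simps)
  then have \<delta>_square: "\<delta> * \<delta> \<in> \<rat>" using rs by simp
  have \<delta>_irrational: "\<delta> \<notin> \<rat>"
  proof
    assume "\<delta> \<in> \<rat>"
    then have "(\<delta> + s) / 2 \<in> \<rat>" using rs by simp
    with \<alpha>_irrational show False by (simp add: \<delta>_def)
  qed
  have "K \<subseteq> rat_span \<alpha>"
  proof
    fix x assume "x \<in> K"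
    then obtain pq where "fst pq \<in> \<rat>" "snd pq \<in> \<rat>" "x = fst pq + snd pq * \<alpha>"
      using ex1_implies_ex[OF rep] by blast
    then show "x \<in> rat_span \<alpha>" by (intro rat_span_memI)
  qed
  moreover have "rat_span \<alpha> \<subseteq> K"
    using Rats_subset_real_subfield[OF K] \<alpha>
    by (auto elim!: rat_span_memE intro!: real_subfield_add[OF K] real_subfield_mult[OF K])
  moreover have "rat_span \<alpha> = rat_span \<delta>"
  proof (intro equalityI rat_span_subset)
    show "\<alpha> \<in> rat_span \<delta>"
      by (rule rat_span_memI[of "s / 2" "1 / 2"]) (use rs(2) in \<open>simp_all add: \<delta>_def field_simps\<close>)
    show "\<delta> \<in> rat_span \<alpha>"
      by (rule rat_span_memI[of "- s" 2]) (use rs(2) in \<open>simp_all add: \<delta>_def field_simps\<close>)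
  qed
  ultimately have "K = rat_span \<delta>" by blast
  with \<delta>_irrational \<delta>_square show ?thesis by (rule that)
qed

context
  fixes L :: "real set" and \<tau> :: "real \<Rightarrow> real"
  assumes L: "real_subfield L" and \<tau>: "\<tau> \<in> real_embeddings L"
begin

lemma real_embedding_add_Rats_mult:
  assumes "y \<in> L" "\<delta> \<in> L" "q \<in> \<rat>"
  shows "\<tau> (y + q * \<delta>) = \<tau> y + q * \<tau> \<delta>"
proof -
  have "q \<in> L" using assms(3) Rats_subset_real_subfield[OF L] by auto
  then show ?thesis
    using assms by (simp add: real_embedding_add[OF \<tau>] real_embedding_mult[OF \<tau>]
        real_embedding_Rats[OF L \<tau>] real_subfield_mult[OF L])
qed

lemma real_embedding_rat_span:
  assumes "\<delta> \<in> L" "p \<in> \<rat>" "q \<in> \<rat>"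
  shows "\<tau> (p + q * \<delta>) = p + q * \<tau> \<delta>"
  using assms Rats_subset_real_subfield[OF L]
  by (auto simp: real_embedding_add_Rats_mult real_embedding_Rats[OF L \<tau>])

lemma real_embedding_sqrt_cases:
  assumes "\<delta> \<in> L" "\<delta> * \<delta> \<in> \<rat>"
  shows "\<tau> \<delta> = \<delta> \<or> \<tau> \<delta> = - \<delta>"
proof -
  have "\<tau> \<delta> * \<tau> \<delta> = \<delta> * \<delta>"
    using real_embedding_mult[OF \<tau> assms(1) assms(1)] real_embedding_Rats[OF L \<tau> assms(2)] by simp
  then have "(\<tau> \<delta> - \<delta>) * (\<tau> \<delta> + \<delta>) = 0" by (simp add: algebra_simps)
  then show ?thesis by (auto simp: add_eq_0_iff)
qed

lemma real_embedding_rat_span_eq: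
  assumes "\<delta> \<in> L" "\<tau> \<delta> = \<delta>" "x \<in> rat_span \<delta>"
  shows "\<tau> x = x"
proof -
  obtain p q where "p \<in> \<rat>" "q \<in> \<rat>" "x = p + q * \<delta>"
    using assms(3) by (rule rat_span_memE)
  then show ?thesis using real_embedding_rat_span assms(1,2) by simp
qed

end

section \<open>Units of real quadratic fields\<close>

lemma algebraic_integer_iff_algebraic_int: "algebraic_integer (x :: real) \<longleftrightarrow> algebraic_int x"
  unfolding algebraic_integer_def algebraic_int_altdef_ipoly by auto

lemma poly_Rats_if_Ints_coeffs:
  fixes p :: "real poly"
  shows "(\<forall>i. coeff p i \<in> \<int>) \<Longrightarrow> r \<in> \<rat> \<Longrightarrow> poly p r \<in> \<rat>"
proof (induction p rule: pCons_induct)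
  case (pCons a p)
  then show ?case
    by (metis Ints_subset_Rats Rats_add Rats_mult coeff_pCons_0 coeff_pCons_Suc poly_pCons subsetD)
qed simp

lemma poly_even_odd_decomposition:
  fixes p :: "real poly"
  assumes "\<forall>i. coeff p i \<in> \<int>"
  shows "\<exists>ev od. (\<forall>i. coeff ev i \<in> \<int>) \<and> (\<forall>i. coeff od i \<in> \<int>)
     \<and> (\<forall>x. poly p x = poly ev (x * x) + x * poly od (x * x))
     \<and> (p = 0 \<longrightarrow> ev = 0 \<and> od = 0)
     \<and> (p \<noteq> 0 \<longrightarrow> lead_coeff (if even (degree p) then ev else od) = lead_coeff p)"
  using assms
proof (induction p rule: pCons_induct)
  case 0
  show ?case by (intro exI[of _ 0]) auto
next
  case (pCons a p)
  have a: "a \<in> \<int>" and "\<forall>i. coeff p i \<in> \<int>"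
    using pCons.prems by (metis coeff_pCons_0, metis coeff_pCons_Suc)
  then obtain ev od where IH: "\<forall>i. coeff ev i \<in> \<int>" "\<forall>i. coeff od i \<in> \<int>"
    "\<forall>x. poly p x = poly ev (x * x) + x * poly od (x * x)" "p = 0 \<longrightarrow> ev = 0 \<and> od = 0"
    "p \<noteq> 0 \<longrightarrow> lead_coeff (if even (degree p) then ev else od) = lead_coeff p"
    using pCons.IH by blast
  show ?case
  proof (rule exI[of _ "pCons a od"], rule exI[of _ ev], intro conjI impI)
    show "\<forall>i. coeff (pCons a od) i \<in> \<int>"
      using a IH(2) by (simp add: coeff_pCons split: nat.split)
    show "\<forall>x. poly (pCons a p) x = poly (pCons a od) (x * x) + x * poly ev (x * x)"
      using IH(3) by (simp add: algebra_simps)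
    show "lead_coeff (if even (degree (pCons a p)) then pCons a od else ev) = lead_coeff (pCons a p)"
      if "pCons a p \<noteq> 0"
    proof (cases "p = 0")
      case False
      then show ?thesis
        using IH(5) by (cases "even (degree p)") (auto simp: lead_coeff_pCons)
    qed (use IH(4) in simp)
  qed (use IH(1) pCons.hyps in auto)
qed

text \<open>Splitting a monic integer polynomial into even and odd parts, \<open>p(x) = e(x\<^sup>2) + x o(x\<^sup>2)\<close>:
  as \<open>x\<close> is irrational but \<open>e(x\<^sup>2)\<close>, \<open>o(x\<^sup>2)\<close> are rational, both vanish, and one of \<open>e\<close>, \<open>o\<close> is monic.\<close>
lemma algebraic_int_square_if_Rats:
  fixes x :: real
  assumes "algebraic_int x" "x * x \<in> \<rat>"
  shows "algebraic_int (x * x)"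
proof (cases "x \<in> \<rat>")
  case True
  then have "x \<in> \<int>" using rational_algebraic_int_is_int assms(1) by blast
  then show ?thesis by (simp add: int_imp_algebraic_int)
next
  case False
  obtain p :: "real poly" where p: "lead_coeff p = 1" "\<forall>i. coeff p i \<in> \<int>" "poly p x = 0"
    using assms(1) by (auto simp: algebraic_int.simps)
  obtain ev od where eo: "\<forall>i. coeff ev i \<in> \<int>" "\<forall>i. coeff od i \<in> \<int>"
    "poly p x = poly ev (x * x) + x * poly od (x * x)"
    "lead_coeff (if even (degree p) then ev else od) = 1"
    using poly_even_odd_decomposition[OF p(2)] p(1) by force
  have rat: "poly ev (x * x) \<in> \<rat>" "poly od (x * x) \<in> \<rat>"
    using poly_Rats_if_Ints_coeffs eo(1,2) assms(2) by auto
  have "poly od (x * x) = 0"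
  proof (rule ccontr)
    assume "poly od (x * x) \<noteq> 0"
    then have "x = - poly ev (x * x) / poly od (x * x)"
      using p(3) eo(3) by (simp add: field_simps add_eq_0_iff)
    then show False using False rat by (metis Rats_divide Rats_minus_iff)
  qed
  then have "poly ev (x * x) = 0" using p(3) eo(3) by simp
  then show ?thesis
    using \<open>poly od (x * x) = 0\<close> eo(1,2,4) by (cases "even (degree p)") (auto intro: algebraic_int.intros)
qed

lemma unit_square_not_Rats:
  fixes u :: real
  assumes "u > 1" "algebraic_integer u" "algebraic_integer (inverse u)"
  shows "u * u \<notin> \<rat>"
proof
  assume u: "u * u \<in> \<rat>"
  then have u': "inverse u * inverse u \<in> \<rat>"
    by (metis Rats_inverse inverse_mult_distrib)
  have "u * u \<in> \<int>" "inverse u * inverse u \<in> \<int>"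
    using assms(2,3) u u' algebraic_int_square_if_Rats rational_algebraic_int_is_int
    by (auto simp: algebraic_integer_iff_algebraic_int)
  moreover have "0 < inverse u * inverse u" "inverse u * inverse u < 1"
    using assms(1) by (simp_all add: less_1_mult inverse_less_1_iff flip: inverse_mult_distrib)
  ultimately show False by (auto elim!: Ints_cases)
qed

lemma real_embedding_int_units:
  assumes L: "real_subfield L" and \<tau>: "\<tau> \<in> real_embeddings L" and "K \<subseteq> L" "\<tau> ` K \<subseteq> K"
    and v: "v \<in> int_units K"
  shows "\<tau> v \<in> int_units K"
proof -
  have "v \<in> L" "v \<noteq> 0" "algebraic_integer v" "algebraic_integer (inverse v)"
    using v assms(3) by (auto simp: int_units_def)
  then show ?thesis
    using v assms(4) real_embedding_nonzero[OF L \<tau>] algebraic_integer_real_embedding[OF L \<tau>]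
      real_embedding_inverse[OF L \<tau>] real_subfield_inverse[OF L]
    by (fastforce simp: int_units_def)
qed

lemma ln_powi:
  fixes x :: real
  assumes "x > 0"
  shows "ln (x powi m) = of_int m * ln x"
proof (cases "m \<ge> 0")
  case True
  then show ?thesis using ln_realpow[of x "nat m"] assms by (simp add: power_int_def)
next
  case False
  then show ?thesis using assms by (simp add: power_int_def ln_realpow ln_inverse)
qed

text \<open>Writing \<open>\<tau> u = \<plusminus>u powi m\<close> and applying the involution \<open>\<tau>\<close> again gives
  \<open>u = \<plusminus>u powi (m * m)\<close>, so \<open>m = \<plusminus>1\<close>.\<close>
lemma fundamental_unit_conjugate_cases:
  assumes L: "real_subfield L" and \<tau>: "\<tau> \<in> real_embeddings L" and KL: "K \<subseteq> L" and "\<tau> ` K \<subseteq> K"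
    and involution: "\<And>x. x \<in> K \<Longrightarrow> \<tau> (\<tau> x) = x" and u: "fundamental_unit K u"
  shows "\<tau> u = u \<or> \<tau> u = - u \<or> \<bar>\<tau> u\<bar> = inverse u"
proof -
  have uK: "u \<in> int_units K" and u1: "u > 1"
    using u by (simp_all add: fundamental_unit_def)
  have uL: "u \<in> L" using uK KL by (auto simp: int_units_def)
  have "\<tau> u \<in> int_units K"
    using real_embedding_int_units[OF L \<tau> KL \<open>\<tau> ` K \<subseteq> K\<close> uK] .
  then obtain s :: real and m :: int where s: "s = 1 \<or> s = -1" and m: "\<tau> u = s * u powi m"
    using u unfolding fundamental_unit_def by blast
  have sL: "s \<in> L" and s_fixed: "\<tau> s = s"
    using s real_subfield_one[OF L] real_subfield_uminus[OF L] real_embedding_one[OF \<tau>]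
      real_embedding_uminus[OF L \<tau>] by auto
  have "u = \<tau> (\<tau> u)" using involution uK by (simp add: int_units_def)
  also have "\<dots> = \<tau> (s * u powi m)" by (simp add: m)
  also have "\<dots> = s * \<tau> u powi m"
    using sL uL s_fixed
    by (simp add: real_embedding_mult[OF \<tau>] real_embedding_powi[OF L \<tau>] real_subfield_powi[OF L])
  also have "\<dots> = (s * s powi m) * u powi (m * m)"
    by (simp add: m power_int_mult_distrib power_int_mult)
  finally have "\<bar>u\<bar> = \<bar>(s * s powi m) * u powi (m * m)\<bar>"
    by simp
  then have "u = u powi (m * m)"
    using s u1 by (auto simp: abs_mult power_int_abs)
  then have "ln u = ln (u powi (m * m))" by (rule arg_cong)
  also have "\<dots> = of_int (m * m) * ln u"
    using u1 by (intro ln_powi) simp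
  finally have "m * m = 1"
    using u1 by (metis ln_gt_zero less_irrefl mult_cancel_right1 of_int_eq_1_iff)
  then have "m = 1 \<or> m = -1" by (simp add: zmult_eq_1_iff)
  then show ?thesis
    using m s u1 by (auto simp: power_int_minus)
qed

lemma abs_conjugate_fundamental_unit:
  assumes L: "real_subfield L" and \<tau>: "\<tau> \<in> real_embeddings L"
    and \<delta>: "\<delta> \<notin> \<rat>" "\<delta> * \<delta> \<in> \<rat>" and KL: "rat_span \<delta> \<subseteq> L" and conj: "\<tau> \<delta> = - \<delta>"
    and u: "fundamental_unit (rat_span \<delta>) u"
  shows "\<bar>\<tau> u\<bar> = inverse u"
proof -
  have \<delta>L: "\<delta> \<in> L" using KL self_in_rat_span by blast
  obtain p q where pq: "p \<in> \<rat>" "q \<in> \<rat>" "u = p + q * \<delta>"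
    using u by (auto simp: fundamental_unit_def int_units_def elim: rat_span_memE)
  have unit_square: "u * u \<notin> \<rat>"
    using u by (intro unit_square_not_Rats) (auto simp: fundamental_unit_def int_units_def)
  have \<tau>_span: "\<tau> (p + q * \<delta>) = p - q * \<delta>" if "p \<in> \<rat>" "q \<in> \<rat>" for p q
    using real_embedding_rat_span[OF L \<tau> \<delta>L that] conj by simp
  have "\<tau> ` rat_span \<delta> \<subseteq> rat_span \<delta>"
  proof
    fix y assume "y \<in> \<tau> ` rat_span \<delta>"
    then obtain p q where "p \<in> \<rat>" "q \<in> \<rat>" "y = \<tau> (p + q * \<delta>)"
      by (auto elim!: rat_span_memE)
    then show "y \<in> rat_span \<delta>"
      by (intro rat_span_memI[of p "- q"]) (simp_all add: \<tau>_span)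
  qed
  moreover have "\<tau> (\<tau> x) = x" if x: "x \<in> rat_span \<delta>" for x
  proof -
    obtain p q where "p \<in> \<rat>" "q \<in> \<rat>" "x = p + q * \<delta>"
      using x by (rule rat_span_memE)
    then show ?thesis using \<tau>_span[of p "- q"] \<tau>_span[of p q] by simp
  qed
  ultimately consider "\<tau> u = u" | "\<tau> u = - u" | "\<bar>\<tau> u\<bar> = inverse u"
    using fundamental_unit_conjugate_cases[OF L \<tau> KL _ _ u] by blast
  then show ?thesis
  proof cases
    case 1
    then have "q * \<delta> = 0" using pq \<tau>_span[OF pq(1,2)] by simp
    then have "u * u = p * p" using pq \<delta>(1) by auto
    then show ?thesis using pq unit_square by simp
  next
    case 2
    then have "p = 0" using pq \<tau>_span[OF pq(1,2)] by simp
    then have "u * u = (q * q) * (\<delta> * \<delta>)" using pq(3) by (simp add: algebra_simps)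
    then show ?thesis using pq \<delta>(2) unit_square by simp
  qed
qed

lemma LOG_fundamental_unit:
  assumes L: "real_subfield L" and \<tau>: "\<tau> \<in> real_embeddings L"
    and \<delta>: "\<delta> \<notin> \<rat>" "\<delta> * \<delta> \<in> \<rat>" and KL: "rat_span \<delta> \<subseteq> L"
    and u: "fundamental_unit (rat_span \<delta>) u"
  shows "\<tau> \<delta> = \<delta> \<Longrightarrow> LOG L u \<tau> = ln u"
    and "\<tau> \<delta> = - \<delta> \<Longrightarrow> LOG L u \<tau> = - ln u"
proof -
  have u1: "u > 1" and uK: "u \<in> rat_span \<delta>"
    using u by (simp_all add: fundamental_unit_def int_units_def)
  have "\<delta> \<in> L" using KL self_in_rat_span by blast
  then show "\<tau> \<delta> = \<delta> \<Longrightarrow> LOG L u \<tau> = ln u"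
    using real_embedding_rat_span_eq[OF L \<tau> _ _ uK] u1 \<tau> by (simp add: LOG_def)
  show "\<tau> \<delta> = - \<delta> \<Longrightarrow> LOG L u \<tau> = - ln u"
    using abs_conjugate_fundamental_unit[OF L \<tau> \<delta> KL _ u] u1 \<tau> by (simp add: LOG_def ln_inverse)
qed

lemma LOG_mult:
  assumes "real_subfield L" "x \<in> L" "y \<in> L" "x \<noteq> 0" "y \<noteq> 0"
  shows "LOG L (x * y) = (\<lambda>\<tau>. LOG L x \<tau> + LOG L y \<tau>)"
  using assms real_embedding_nonzero[OF assms(1)]
  by (auto simp: LOG_def real_embedding_mult abs_mult ln_mult)

lemma LOG_powi:
  assumes "real_subfield L" "x \<in> L" "x \<noteq> 0"
  shows "LOG L (x powi m) = (\<lambda>\<tau>. of_int m * LOG L x \<tau>)"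
  using assms real_embedding_nonzero[OF assms(1)]
  by (auto simp: LOG_def real_embedding_powi power_int_abs ln_powi)

section \<open>The trace of a Galois extension\<close>

lemma field_auts_closed: "\<sigma> \<in> field_auts L \<Longrightarrow> x \<in> L \<Longrightarrow> \<sigma> x \<in> L"
  unfolding field_auts_def using bij_betwE by blast

lemma field_auts_inj: "\<sigma> \<in> field_auts L \<Longrightarrow> x \<in> L \<Longrightarrow> y \<in> L \<Longrightarrow> \<sigma> x = \<sigma> y \<Longrightarrow> x = y"
  unfolding field_auts_def bij_betw_def inj_on_def by blast

lemma aut_group_one_in_field_auts: "real_subfield L \<Longrightarrow> \<one>\<^bsub>aut_group L\<^esub> \<in> field_auts L"
  unfolding field_auts_def aut_group_def
  by (auto simp: real_subfield_one real_subfield_add real_subfield_mult bij_betw_def inj_on_def intro!: image_eqI)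

lemma aut_group_mult_in_field_auts:
  assumes L: "real_subfield L" and \<sigma>: "\<sigma> \<in> field_auts L" and \<tau>: "\<tau> \<in> field_auts L"
  shows "\<sigma> \<otimes>\<^bsub>aut_group L\<^esub> \<tau> \<in> field_auts L"
proof -
  have "bij_betw (\<sigma> \<circ> \<tau>) L L" using \<sigma> \<tau> by (auto simp: field_auts_def intro: bij_betw_trans)
  then have "bij_betw (\<sigma> \<otimes>\<^bsub>aut_group L\<^esub> \<tau>) L L"
    by (rule bij_betw_cong[THEN iffD1, rotated]) (simp add: aut_group_def)
  moreover have "\<sigma> \<in> real_embeddings L" "\<tau> \<in> real_embeddings L"
    using \<sigma> \<tau> field_auts_subset_real_embeddings by auto
  ultimately show ?thesis unfolding field_auts_def
    using real_subfield_one[OF L] field_auts_closed[OF \<tau>] real_subfield_add[OF L] real_subfield_mult[OF L]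
    by (auto simp: aut_group_def real_embedding_one real_embedding_add real_embedding_mult)
qed

lemma aut_group_mult_left_inj:
  assumes \<sigma>: "\<sigma> \<in> field_auts L"
  shows "inj_on (\<lambda>\<tau>. \<sigma> \<otimes>\<^bsub>aut_group L\<^esub> \<tau>) (field_auts L)"
proof
  fix \<tau> \<tau>' assume \<tau>: "\<tau> \<in> field_auts L" and \<tau>': "\<tau>' \<in> field_auts L"
    and eq: "\<sigma> \<otimes>\<^bsub>aut_group L\<^esub> \<tau> = \<sigma> \<otimes>\<^bsub>aut_group L\<^esub> \<tau>'"
  show "\<tau> = \<tau>'"
  proof
    fix x show "\<tau> x = \<tau>' x"
    proof (cases "x \<in> L")
      case True
      then have "\<sigma> (\<tau> x) = \<sigma> (\<tau>' x)" using fun_cong[OF eq, of x] by (simp add: aut_group_def)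
      then show ?thesis by (rule field_auts_inj[OF \<sigma> field_auts_closed[OF \<tau> True] field_auts_closed[OF \<tau>' True]])
    qed (use \<tau> \<tau>' in \<open>simp add: field_auts_def\<close>)
  qed
qed

definition field_trace :: "real set \<Rightarrow> real \<Rightarrow> real" where
  "field_trace L x = (\<Sum>\<sigma>\<in>field_auts L. \<sigma> x)"

lemma field_trace_fixed:
  assumes L: "real_subfield L" and fin: "finite (field_auts L)" and \<sigma>: "\<sigma> \<in> field_auts L" and x: "x \<in> L"
  shows "\<sigma> (field_trace L x) = field_trace L x"
proof -
  let ?G = "field_auts L" and ?m = "\<lambda>\<tau>. \<sigma> \<otimes>\<^bsub>aut_group L\<^esub> \<tau>"
  have "\<sigma> (field_trace L x) = (\<Sum>\<tau>\<in>?G. \<sigma> (\<tau> x))"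
    unfolding field_trace_def
    using field_auts_subset_real_embeddings \<sigma> field_auts_closed x
    by (subst real_embedding_sum[OF L]) auto
  also have "\<dots> = (\<Sum>\<tau>\<in>?G. ?m \<tau> x)" using x by (simp add: aut_group_def)
  also have "\<dots> = (\<Sum>\<tau>\<in>?m ` ?G. \<tau> x)"
    using aut_group_mult_left_inj[OF \<sigma>] by (simp add: sum.reindex)
  also have "?m ` ?G = ?G"
    using aut_group_mult_left_inj[OF \<sigma>] aut_group_mult_in_field_auts[OF L \<sigma>]
    by (intro card_subset_eq fin) (auto simp: card_image)
  finally show ?thesis unfolding field_trace_def .
qed

lemma field_trace_Rats:
  assumes L: "real_subfield L" and "galois_over_Q L" "finite (field_auts L)" "x \<in> L"
  shows "field_trace L x \<in> \<rat>"
proof -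
  have "field_trace L x \<in> L"
    unfolding field_trace_def using assms(4) by (auto intro: real_subfield_sum[OF L] field_auts_closed)
  then show ?thesis
    using assms field_trace_fixed[OF L] unfolding galois_over_Q_def by blast
qed

text \<open>Each conjugate of such \<open>y\<close> is \<open>\<plusminus>y\<close>, so the trace is a rational multiple of the irrational \<open>y\<close>.\<close>
lemma field_trace_sqrt_eq_0:
  assumes L: "real_subfield L" and "galois_over_Q L" "finite (field_auts L)"
    and y: "y \<in> L" "y \<notin> \<rat>" "y * y \<in> \<rat>"
  shows "field_trace L y = 0"
proof -
  define c where "c = (\<Sum>\<sigma>\<in>field_auts L. \<sigma> y / y)"
  have y0: "y \<noteq> 0" using y(2) by auto
  have "\<sigma> y / y \<in> \<rat>" if "\<sigma> \<in> field_auts L" for \<sigma>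
    using real_embedding_sqrt_cases[OF L field_auts_subset_real_embeddings[THEN subsetD, OF that] y(1,3)] y0
    by auto
  then have "c \<in> \<rat>" unfolding c_def by (rule Rats_sum)
  moreover have trace: "field_trace L y = c * y"
    using y0 by (simp add: field_trace_def c_def sum_distrib_right)
  moreover have "field_trace L y \<in> \<rat>" using field_trace_Rats assms by blast
  ultimately have "c = 0"
    using y(2) y0 by (metis Rats_divide nonzero_mult_div_cancel_left)
  then show ?thesis using trace by simp
qed

section \<open>Real biquadratic fields\<close>

text \<open>Here \<open>(a\<^sub>i, b\<^sub>i, c\<^sub>i)\<close> are the signs by which the \<open>i\<close>-th nontrivial automorphism acts on
  \<open>d\<^sub>1, d\<^sub>2, d\<^sub>3\<close>; the hypotheses say that \<open>d\<^sub>1, d\<^sub>2, d\<^sub>3, d\<^sub>1d\<^sub>2, d\<^sub>1d\<^sub>3, d\<^sub>2d\<^sub>3\<close> have trace zero.\<close>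
lemma sign_triples_eq:
  fixes a1 a2 a3 b1 b2 b3 c1 c2 c3 :: real
  assumes "a1 = 1 \<or> a1 = -1" "a2 = 1 \<or> a2 = -1" "a3 = 1 \<or> a3 = -1"
    "b1 = 1 \<or> b1 = -1" "b2 = 1 \<or> b2 = -1" "b3 = 1 \<or> b3 = -1"
    "c1 = 1 \<or> c1 = -1" "c2 = 1 \<or> c2 = -1" "c3 = 1 \<or> c3 = -1"
    "1 + a1 + a2 + a3 = 0" "1 + b1 + b2 + b3 = 0" "1 + c1 + c2 + c3 = 0"
    "1 + a1 * b1 + a2 * b2 + a3 * b3 = 0" "1 + a1 * c1 + a2 * c2 + a3 * c3 = 0"
    "1 + b1 * c1 + b2 * c2 + b3 * c3 = 0"
  shows "{(a1, b1, c1), (a2, b2, c2), (a3, b3, c3)} = {(1, -1, -1), (-1, 1, -1), (-1, -1, 1)}"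
proof -
  have "(a1, a2, a3) = (1, -1, -1) \<or> (a1, a2, a3) = (-1, 1, -1) \<or> (a1, a2, a3) = (-1, -1, 1)"
    using assms(1-3,10) by auto
  moreover have "(b1, b2, b3) = (1, -1, -1) \<or> (b1, b2, b3) = (-1, 1, -1) \<or> (b1, b2, b3) = (-1, -1, 1)"
    using assms(4-6,11) by auto
  moreover have "(c1, c2, c3) = (1, -1, -1) \<or> (c1, c2, c3) = (-1, 1, -1) \<or> (c1, c2, c3) = (-1, -1, 1)"
    using assms(7-9,12) by auto
  ultimately show ?thesis
    using assms(13-15) by (elim disjE) (simp_all, auto)
qed

locale biquadratic_field =
  fixes L :: "real set" and d1 d2 d3 :: real
  assumes subfield: "real_subfield L"
    and galois: "galois_over_Q L"
    and finite_auts: "finite (field_auts L)"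
    and card_auts: "card (field_auts L) = 4"
    and generators: "d1 \<in> L" "d2 \<in> L" "d3 \<in> L"
    and irrational: "d1 \<notin> \<rat>" "d2 \<notin> \<rat>" "d3 \<notin> \<rat>"
      "d1 * d2 \<notin> \<rat>" "d1 * d3 \<notin> \<rat>" "d2 * d3 \<notin> \<rat>"
    and squares: "d1 * d1 \<in> \<rat>" "d2 * d2 \<in> \<rat>" "d3 * d3 \<in> \<rat>"
begin

abbreviation "G \<equiv> field_auts L"
abbreviation "\<iota> \<equiv> \<one>\<^bsub>aut_group L\<^esub>"

lemma iota_apply: "x \<in> L \<Longrightarrow> \<iota> x = x"
  by (simp add: aut_group_def)

lemma G_embeddings: "\<sigma> \<in> G \<Longrightarrow> \<sigma> \<in> real_embeddings L"
  using field_auts_subset_real_embeddings by blast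

definition conj_sign :: "real \<Rightarrow> (real \<Rightarrow> real) \<Rightarrow> real" where
  "conj_sign d \<sigma> = \<sigma> d / d"

lemma conj_sign_cases:
  assumes "\<sigma> \<in> real_embeddings L" "d \<in> L" "d \<noteq> 0" "d * d \<in> \<rat>"
  shows "(conj_sign d \<sigma> = 1 \<or> conj_sign d \<sigma> = -1) \<and> \<sigma> d = conj_sign d \<sigma> * d"
  using real_embedding_sqrt_cases[OF subfield assms(1,2,4)] assms(3) by (auto simp: conj_sign_def)

lemma conj_sign_mult:
  assumes "\<sigma> \<in> real_embeddings L" "d \<in> L" "d' \<in> L"
  shows "conj_sign (d * d') \<sigma> = conj_sign d \<sigma> * conj_sign d' \<sigma>"
  using real_embedding_mult[OF assms] by (simp add: conj_sign_def)

lemma nonzero: "d1 \<noteq> 0" "d2 \<noteq> 0" "d3 \<noteq> 0"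
  using irrational by auto

lemma conj_sign_sum_eq_0:
  assumes "d \<in> L" "d \<notin> \<rat>" "d * d \<in> \<rat>"
  shows "(\<Sum>\<sigma>\<in>G. conj_sign d \<sigma>) = 0"
proof -
  have "d \<noteq> 0" using assms(2) by auto
  then have "(\<Sum>\<sigma>\<in>G. conj_sign d \<sigma>) * d = field_trace L d"
    by (simp add: field_trace_def conj_sign_def sum_distrib_right)
  also have "\<dots> = 0"
    using field_trace_sqrt_eq_0[OF subfield galois finite_auts assms] .
  finally show ?thesis using assms(2) by auto
qed

lemma nontrivial_auts_signs:
  obtains g1 g2 g3 where "G = insert \<iota> {g1, g2, g3}" "\<iota> \<notin> {g1, g2, g3}"
    "(\<lambda>\<sigma>. (conj_sign d1 \<sigma>, conj_sign d2 \<sigma>, conj_sign d3 \<sigma>)) ` {g1, g2, g3} = {(1, -1, -1), (-1, 1, -1), (-1, -1, 1)}"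
proof -
  have \<iota>: "\<iota> \<in> G" by (rule aut_group_one_in_field_auts[OF subfield])
  then have "card (G - {\<iota>}) = 3" using card_auts finite_auts by simp
  then obtain g1 g2 g3 where g: "G - {\<iota>} = {g1, g2, g3}" "distinct [g1, g2, g3]"
    by (auto simp: card_3_iff)
  have G: "G = insert \<iota> {g1, g2, g3}" and \<iota>_notin: "\<iota> \<notin> {g1, g2, g3}" using g(1) \<iota> by blast+
  have sum: "1 + conj_sign d g1 + conj_sign d g2 + conj_sign d g3 = 0" if "d \<in> L" "d \<notin> \<rat>" "d * d \<in> \<rat>" for d
  proof -
    have "d \<noteq> 0" using that(2) by auto
    then show ?thesis
      using conj_sign_sum_eq_0[OF that] g(2) \<iota>_notin that(1) by (simp add: G conj_sign_def iota_apply add.assoc)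
  qed
  have prod: "conj_sign (d * d') \<sigma> = conj_sign d \<sigma> * conj_sign d' \<sigma>" if "\<sigma> \<in> {g1, g2, g3}" "d \<in> L" "d' \<in> L" for \<sigma> d d'
    using conj_sign_mult[OF G_embeddings that(2,3)] that(1) G by blast
  have pm: "conj_sign d \<sigma> = 1 \<or> conj_sign d \<sigma> = -1" if "\<sigma> \<in> {g1, g2, g3}" "d \<in> {d1, d2, d3}" for \<sigma> d
    using conj_sign_cases[OF G_embeddings, of \<sigma> d] that G generators nonzero squares by blast
  have sum_mult: "1 + conj_sign d g1 * conj_sign d' g1 + conj_sign d g2 * conj_sign d' g2 + conj_sign d g3 * conj_sign d' g3 = 0"
    if "d \<in> L" "d' \<in> L" "d * d' \<notin> \<rat>" "d * d \<in> \<rat>" "d' * d' \<in> \<rat>" for d d'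
  proof -
    have "(d * d') * (d * d') = (d * d) * (d' * d')" by (simp add: algebra_simps)
    then have "(d * d') * (d * d') \<in> \<rat>" using Rats_mult[OF that(4,5)] by metis
    then show ?thesis
      using sum[of "d * d'"] prod[of _ d d'] that(1-3) real_subfield_mult[OF subfield] by simp
  qed
  have "(\<lambda>\<sigma>. (conj_sign d1 \<sigma>, conj_sign d2 \<sigma>, conj_sign d3 \<sigma>)) ` {g1, g2, g3} = {(1, -1, -1), (-1, 1, -1), (-1, -1, 1)}"
    unfolding image_insert image_empty
    by (rule sign_triples_eq)
      (use pm sum[OF generators(1) irrational(1) squares(1)] sum[OF generators(2) irrational(2) squares(2)]
        sum[OF generators(3) irrational(3) squares(3)]
        sum_mult[OF generators(1,2) irrational(4) squares(1,2)]
        sum_mult[OF generators(1,3) irrational(5) squares(1,3)]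
        sum_mult[OF generators(2,3) irrational(6) squares(2,3)] in auto)
  with G \<iota>_notin show ?thesis by (rule that)
qed

lemma auts_sign_patterns:
  obtains t1 t2 t3 where "G = {\<iota>, t1, t2, t3}" "distinct [\<iota>, t1, t2, t3]"
    "t1 d1 = d1" "t1 d2 = - d2" "t1 d3 = - d3"
    "t2 d1 = - d1" "t2 d2 = d2" "t2 d3 = - d3"
    "t3 d1 = - d1" "t3 d2 = - d2" "t3 d3 = d3"
proof -
  define s where "s \<sigma> = (conj_sign d1 \<sigma>, conj_sign d2 \<sigma>, conj_sign d3 \<sigma>)" for \<sigma>
  obtain g1 g2 g3 where G: "G = insert \<iota> {g1, g2, g3}" "\<iota> \<notin> {g1, g2, g3}"
    and patterns: "s ` {g1, g2, g3} = {(1, -1, -1), (-1, 1, -1), (-1, -1, 1)}"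
    unfolding s_def by (rule nontrivial_auts_signs)
  have "(1, -1, -1) \<in> s ` {g1, g2, g3}" unfolding patterns by simp
  then obtain t1 where t1: "(1, -1, -1) = s t1" "t1 \<in> {g1, g2, g3}" by (rule imageE)
  have "(-1, 1, -1) \<in> s ` {g1, g2, g3}" unfolding patterns by simp
  then obtain t2 where t2: "(-1, 1, -1) = s t2" "t2 \<in> {g1, g2, g3}" by (rule imageE)
  have "(-1, -1, 1) \<in> s ` {g1, g2, g3}" unfolding patterns by simp
  then obtain t3 where t3: "(-1, -1, 1) = s t3" "t3 \<in> {g1, g2, g3}" by (rule imageE)
  have "s \<iota> = (1, 1, 1)"
    using generators nonzero by (simp add: s_def conj_sign_def iota_apply)
  then have distinct: "distinct [\<iota>, t1, t2, t3]"
    using t1(1)[symmetric] t2(1)[symmetric] t3(1)[symmetric] by auto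
  have G_eq: "G = {\<iota>, t1, t2, t3}"
  proof (rule card_subset_eq[OF finite_auts, symmetric])
    show "{\<iota>, t1, t2, t3} \<subseteq> G" using t1(2) t2(2) t3(2) G(1) by blast
    show "card {\<iota>, t1, t2, t3} = card G" using distinct card_auts by simp
  qed
  show ?thesis
    by (rule that[OF G_eq distinct])
      (use t1(1) t2(1) t3(1) nonzero in \<open>simp_all add: s_def conj_sign_def field_simps\<close>)
qed

lemma field_trace_eq:
  assumes "G = {\<iota>, t1, t2, t3}" "distinct [\<iota>, t1, t2, t3]" "y \<in> L"
  shows "field_trace L y = y + t1 y + t2 y + t3 y"
  using assms by (simp add: field_trace_def iota_apply add.assoc)

lemma decomposition:
  assumes x: "x \<in> L"
  obtains r0 r1 r2 r3 where "r0 \<in> \<rat>" "r1 \<in> \<rat>" "r2 \<in> \<rat>" "r3 \<in> \<rat>"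
    "x = r0 + r1 * d1 + r2 * d2 + r3 * d3"
proof -
  obtain t1 t2 t3 where G: "G = {\<iota>, t1, t2, t3}" "distinct [\<iota>, t1, t2, t3]"
    and t: "t1 d1 = d1" "t1 d2 = - d2" "t1 d3 = - d3" "t2 d1 = - d1" "t2 d2 = d2" "t2 d3 = - d3"
      "t3 d1 = - d1" "t3 d2 = - d2" "t3 d3 = d3"
    by (rule auts_sign_patterns)
  have t_emb: "t1 \<in> real_embeddings L" "t2 \<in> real_embeddings L" "t3 \<in> real_embeddings L"
    using G(1) G_embeddings by auto
  have "x * d \<in> L" if "d \<in> L" for d
    using real_subfield_mult[OF subfield x that] .
  then have tr_mult: "field_trace L (x * d1) = (x + t1 x - t2 x - t3 x) * d1"
      "field_trace L (x * d2) = (x - t1 x + t2 x - t3 x) * d2"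
      "field_trace L (x * d3) = (x - t1 x - t2 x + t3 x) * d3"
    using field_trace_eq[OF G] generators x t
    by (simp_all add: real_embedding_mult[OF t_emb(1)] real_embedding_mult[OF t_emb(2)]
        real_embedding_mult[OF t_emb(3)] algebra_simps)
  define r where "r d = field_trace L (x * d) / (4 * (d * d))" for d
  have r_Rats: "r d \<in> \<rat>" if "d \<in> L" "d * d \<in> \<rat>" for d
    unfolding r_def using field_trace_Rats[OF subfield galois finite_auts] real_subfield_mult[OF subfield x that(1)] that(2)
    by simp
  have r_mult: "r d * d = field_trace L (x * d) / d / 4" if "d \<noteq> 0" for d
    using that by (simp add: r_def field_simps)
  have "x = field_trace L x / 4 + r d1 * d1 + r d2 * d2 + r d3 * d3"
    unfolding r_mult[OF nonzero(1)] r_mult[OF nonzero(2)] r_mult[OF nonzero(3)] tr_mult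
      field_trace_eq[OF G x]
    by (simp add: nonzero field_simps)
  moreover have "field_trace L x / 4 \<in> \<rat>"
    using field_trace_Rats[OF subfield galois finite_auts x] by simp
  ultimately show ?thesis
    using that r_Rats generators squares by blast
qed

lemma real_embeddings_eqI:
  assumes \<tau>: "\<tau> \<in> real_embeddings L" and \<tau>': "\<tau>' \<in> real_embeddings L"
    and "\<tau> d1 = \<tau>' d1" "\<tau> d2 = \<tau>' d2" "\<tau> d3 = \<tau>' d3"
  shows "\<tau> = \<tau>'"
proof
  fix x
  show "\<tau> x = \<tau>' x"
  proof (cases "x \<in> L")
    case True
    then obtain r0 r1 r2 r3 where r: "r0 \<in> \<rat>" "r1 \<in> \<rat>" "r2 \<in> \<rat>" "r3 \<in> \<rat>"
      "x = r0 + r1 * d1 + r2 * d2 + r3 * d3"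
      by (rule decomposition)
    have "\<sigma> x = r0 + r1 * \<sigma> d1 + r2 * \<sigma> d2 + r3 * \<sigma> d3" if \<sigma>: "\<sigma> \<in> real_embeddings L" for \<sigma>
    proof -
      have "r0 + r1 * d1 \<in> L" "r0 + r1 * d1 + r2 * d2 \<in> L"
        using True r generators unfolding r(5)
        by (auto intro!: real_subfield_add[OF subfield] real_subfield_mult[OF subfield]
            dest: Rats_subset_real_subfield[OF subfield, THEN subsetD])
      then show ?thesis
        using r generators Rats_subset_real_subfield[OF subfield]
        by (auto simp: real_embedding_add_Rats_mult[OF subfield \<sigma>] real_embedding_Rats[OF subfield \<sigma>])
    qed
    from this[OF \<tau>] this[OF \<tau>'] show ?thesis using assms(3-5) by simp
  qed (simp add: real_embedding_outside[OF \<tau>] real_embedding_outside[OF \<tau>'])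
qed

text \<open>Every embedding fixes the rational number \<open>d\<^sub>1d\<^sub>2d\<^sub>3\<close>, so it flips an even number of the
  \<open>d\<^sub>i\<close> and agrees with an automorphism on the generators.\<close>
lemma real_embeddings_sign_patterns:
  obtains t0 t1 t2 t3 where "real_embeddings L = {t0, t1, t2, t3}" "distinct [t0, t1, t2, t3]"
    "t0 d1 = d1" "t0 d2 = d2" "t0 d3 = d3"
    "t1 d1 = d1" "t1 d2 = - d2" "t1 d3 = - d3"
    "t2 d1 = - d1" "t2 d2 = d2" "t2 d3 = - d3"
    "t3 d1 = - d1" "t3 d2 = - d2" "t3 d3 = d3"
proof -
  obtain t1 t2 t3 where G: "G = {\<iota>, t1, t2, t3}" "distinct [\<iota>, t1, t2, t3]"
    and t: "t1 d1 = d1" "t1 d2 = - d2" "t1 d3 = - d3" "t2 d1 = - d1" "t2 d2 = d2" "t2 d3 = - d3"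
      "t3 d1 = - d1" "t3 d2 = - d2" "t3 d3 = d3"
    by (rule auts_sign_patterns)
  have \<iota>: "\<iota> d1 = d1" "\<iota> d2 = d2" "\<iota> d3 = d3"
    using generators by (simp_all add: iota_apply)
  have dL: "d1 * d2 \<in> L" "d1 * d2 * d3 \<in> L"
    using generators real_subfield_mult[OF subfield] by blast+
  have mult3: "\<sigma> (d1 * d2 * d3) = \<sigma> d1 * \<sigma> d2 * \<sigma> d3" if "\<sigma> \<in> real_embeddings L" for \<sigma>
    using real_embedding_mult[OF that dL(1) generators(3)] real_embedding_mult[OF that generators(1,2)]
    by simp
  have t_emb: "t1 \<in> real_embeddings L" "t2 \<in> real_embeddings L" "t3 \<in> real_embeddings L"
    using G(1) G_embeddings by auto
  have "field_trace L (d1 * d2 * d3) = 4 * (d1 * d2 * d3)"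
    using field_trace_eq[OF G dL(2)] mult3[OF t_emb(1)] mult3[OF t_emb(2)] mult3[OF t_emb(3)] t by simp
  then have "d1 * d2 * d3 = field_trace L (d1 * d2 * d3) / 4" by simp
  then have "d1 * d2 * d3 \<in> \<rat>"
    using field_trace_Rats[OF subfield galois finite_auts dL(2)] by (metis Rats_divide Rats_number_of)
  have "real_embeddings L \<subseteq> G"
  proof
    fix \<tau> assume \<tau>: "\<tau> \<in> real_embeddings L"
    have "\<tau> d1 * \<tau> d2 * \<tau> d3 = d1 * d2 * d3"
      using mult3[OF \<tau>] real_embedding_Rats[OF subfield \<tau> \<open>d1 * d2 * d3 \<in> \<rat>\<close>] by simp
    moreover have "\<tau> d1 = d1 \<or> \<tau> d1 = - d1" "\<tau> d2 = d2 \<or> \<tau> d2 = - d2" "\<tau> d3 = d3 \<or> \<tau> d3 = - d3"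
      using real_embedding_sqrt_cases[OF subfield \<tau>] generators squares by blast+
    ultimately have "\<exists>h\<in>G. \<tau> d1 = h d1 \<and> \<tau> d2 = h d2 \<and> \<tau> d3 = h d3"
      unfolding G(1) using \<iota> t nonzero by (elim disjE) auto
    then show "\<tau> \<in> G"
      using real_embeddings_eqI[OF \<tau> G_embeddings] by metis
  qed
  then have "real_embeddings L = {\<iota>, t1, t2, t3}"
    using field_auts_subset_real_embeddings G(1) by blast
  then show ?thesis using that G(2) \<iota> t by blast
qed
end

section \<open>Norms of bivectors on four points\<close>

definition wedge_comb :: "('a \<Rightarrow> real) \<Rightarrow> ('a \<Rightarrow> real) \<Rightarrow> ('a \<Rightarrow> real) \<Rightarrow> int \<Rightarrow> int \<Rightarrow> int \<Rightarrow> 'a \<Rightarrow> 'a \<Rightarrow> real"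
  where "wedge_comb f1 f2 f3 n1 n2 n3 =
    (\<lambda>v x. of_int n1 * wedge f2 f3 v x + of_int n2 * wedge f1 f3 v x + of_int n3 * wedge f1 f2 v x)"

lemma wedge_comb_0 [simp]: "wedge_comb f1 f2 f3 0 0 0 = (\<lambda>v x. 0)"
  by (simp add: wedge_comb_def)

lemma wedge_comb_add:
  "(\<lambda>v x. wedge_comb f1 f2 f3 n1 n2 n3 v x + wedge_comb f1 f2 f3 m1 m2 m3 v x)
    = wedge_comb f1 f2 f3 (n1 + m1) (n2 + m2) (n3 + m3)"
  by (simp add: wedge_comb_def fun_eq_iff algebra_simps)

text \<open>The Cauchy--Binet expansion: the coefficients are the \<open>2 \<times> 2\<close> minors of the coordinate matrix.\<close>
lemma wedge_lincomb:
  fixes m1 m2 m3 n1 n2 n3 k :: int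
  shows "(\<lambda>v x. of_int k * wedge (\<lambda>\<tau>. of_int m1 * f1 \<tau> + of_int m2 * f2 \<tau> + of_int m3 * f3 \<tau>)
                          (\<lambda>\<tau>. of_int n1 * f1 \<tau> + of_int n2 * f2 \<tau> + of_int n3 * f3 \<tau>) v x)
    = wedge_comb f1 f2 f3 (k * (m2 * n3 - m3 * n2)) (k * (m1 * n3 - m3 * n1)) (k * (m1 * n2 - m2 * n1))"
  by (simp add: wedge_comb_def wedge_def fun_eq_iff algebra_simps)

lemma wedge2_LOG_eq_wedge_comb:
  assumes coords: "\<And>a. a \<in> H \<Longrightarrow>
      \<exists>m1 m2 m3. LOG L a = (\<lambda>\<tau>. of_int m1 * f1 \<tau> + of_int m2 * f2 \<tau> + of_int m3 * f3 \<tau>)"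
    and "w \<in> wedge2_LOG L H"
  obtains n1 n2 n3 where "w = wedge_comb f1 f2 f3 n1 n2 n3"
proof -
  let ?C = "{wedge_comb f1 f2 f3 n1 n2 n3 | n1 n2 n3. True}"
  obtain n :: nat and k a b
    where w: "w = (\<lambda>v x. \<Sum>i<n. of_int (k i) * wedge (LOG L (a i)) (LOG L (b i)) v x)"
      and ab: "\<forall>i<n. a i \<in> H \<and> b i \<in> H"
    using assms(2) unfolding wedge2_LOG_def by blast
  have "(\<lambda>v x. \<Sum>i<n. of_int (k i) * wedge (LOG L (a i)) (LOG L (b i)) v x) \<in> ?C"
    using ab
  proof (induction n)
    case 0
    have "(\<lambda>v x. 0) = wedge_comb f1 f2 f3 0 0 0" by simp
    then show ?case by (simp only: lessThan_0 sum.empty) blast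
  next
    case (Suc n)
    obtain m1 m2 m3 m1' m2' m3'
      where "LOG L (a n) = (\<lambda>\<tau>. of_int m1 * f1 \<tau> + of_int m2 * f2 \<tau> + of_int m3 * f3 \<tau>)"
        "LOG L (b n) = (\<lambda>\<tau>. of_int m1' * f1 \<tau> + of_int m2' * f2 \<tau> + of_int m3' * f3 \<tau>)"
      using coords Suc.prems by (meson lessI)
    then have "(\<lambda>v x. of_int (k n) * wedge (LOG L (a n)) (LOG L (b n)) v x)
      = wedge_comb f1 f2 f3
          (k n * (m2 * m3' - m3 * m2')) (k n * (m1 * m3' - m3 * m1')) (k n * (m1 * m2' - m2 * m1'))"
      by (simp add: wedge_lincomb)
    moreover obtain n1 n2 n3 where
      "(\<lambda>v x. \<Sum>i<n. of_int (k i) * wedge (LOG L (a i)) (LOG L (b i)) v x) = wedge_comb f1 f2 f3 n1 n2 n3"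
      using Suc by auto
    ultimately have "(\<lambda>v x. \<Sum>i<Suc n. of_int (k i) * wedge (LOG L (a i)) (LOG L (b i)) v x)
      = wedge_comb f1 f2 f3 (n1 + k n * (m2 * m3' - m3 * m2')) (n2 + k n * (m1 * m3' - m3 * m1'))
          (n3 + k n * (m1 * m2' - m2 * m1'))"
      unfolding wedge_comb_add[symmetric] by (simp add: fun_eq_iff)
    then show ?case by blast
  qed
  then show ?thesis using that unfolding w by blast
qed

lemma some_doubleton_abs:
  assumes "x \<noteq> y" and sym: "\<bar>B y x\<bar> = \<bar>B x y\<bar>"
  shows "\<bar>B (SOME v. v \<in> {x, y}) (SOME w. w \<in> {x, y} \<and> w \<noteq> (SOME v. v \<in> {x, y}))\<bar> = \<bar>B x y\<bar>"
proof -
  have "(SOME v. v \<in> {x, y}) \<in> {x, y}" by (rule someI[of _ x]) simp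
  then consider "(SOME v. v \<in> {x, y}) = x" | "(SOME v. v \<in> {x, y}) = y" by blast
  then show ?thesis
  proof cases
    case 1
    moreover have "(SOME w. w \<in> {x, y} \<and> w \<noteq> x) = y" using assms(1) by (intro some_equality) auto
    ultimately show ?thesis by simp
  next
    case 2
    moreover have "(SOME w. w \<in> {x, y} \<and> w \<noteq> y) = x" using assms(1) by (intro some_equality) auto
    ultimately show ?thesis using sym by simp
  qed
qed

lemma two_subsets_of_four:
  assumes "distinct [a, b, c, d]"
  shows "{I. I \<subseteq> {a, b, c, d} \<and> card I = 2} = {{a, b}, {a, c}, {a, d}, {b, c}, {b, d}, {c, d}}"
proof (intro equalityI subsetI)
  fix I assume "I \<in> {I. I \<subseteq> {a, b, c, d} \<and> card I = 2}"
  then obtain x y where "I = {x, y}" "x \<noteq> y" "x \<in> {a, b, c, d}" "y \<in> {a, b, c, d}"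
    by (auto simp: card_2_iff)
  then show "I \<in> {{a, b}, {a, c}, {a, d}, {b, c}, {b, d}, {c, d}}" by (auto simp: doubleton_eq_iff)
qed (use assms in auto)

lemma norm1_four:
  assumes d: "distinct [a, b, c, d]" and sym: "\<And>x y. \<bar>B y x\<bar> = \<bar>B x y\<bar>"
  shows "norm1 {a, b, c, d} B = \<bar>B a b\<bar> + \<bar>B a c\<bar> + \<bar>B a d\<bar> + \<bar>B b c\<bar> + \<bar>B b d\<bar> + \<bar>B c d\<bar>"
proof -
  define f where "f I = \<bar>B (SOME v. v \<in> I) (SOME w. w \<in> I \<and> w \<noteq> (SOME v. v \<in> I))\<bar>" for I
  have f: "f {x, y} = \<bar>B x y\<bar>" if "x \<noteq> y" for x y
    unfolding f_def using some_doubleton_abs[OF that sym] .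
  have "{a, b} \<noteq> {a, c}" "{a, b} \<noteq> {a, d}" "{a, b} \<noteq> {b, c}" "{a, b} \<noteq> {b, d}" "{a, b} \<noteq> {c, d}"
    "{a, c} \<noteq> {a, d}" "{a, c} \<noteq> {b, c}" "{a, c} \<noteq> {b, d}" "{a, c} \<noteq> {c, d}"
    "{a, d} \<noteq> {b, c}" "{a, d} \<noteq> {b, d}" "{a, d} \<noteq> {c, d}"
    "{b, c} \<noteq> {b, d}" "{b, c} \<noteq> {c, d}" "{b, d} \<noteq> {c, d}"
    using d by (auto simp: doubleton_eq_iff)
  then have "norm1 {a, b, c, d} B = f {a, b} + f {a, c} + f {a, d} + f {b, c} + f {b, d} + f {c, d}"
    unfolding norm1_def two_subsets_of_four[OF d] f_def[symmetric] by (simp add: add.assoc)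
  then show ?thesis using d by (simp add: f)
qed

lemma abs_add_abs_diff: "\<bar>x + y\<bar> + \<bar>x - y\<bar> = 2 * max \<bar>x\<bar> \<bar>y :: real\<bar>"
  by (simp add: max_def) arith

text \<open>On four points carrying the sign patterns of the Klein four-group, the six coefficients
  of the bivector are \<open>\<plusminus>2(a \<plusminus> b)\<close> for the three pairs among \<open>a, b, c\<close>.\<close>
lemma norm1_wedge_comb_sign_patterns:
  fixes f1 f2 f3 :: "'a \<Rightarrow> real"
  assumes "distinct [t0, t1, t2, t3]"
    and "f1 t0 = l1" "f2 t0 = l2" "f3 t0 = l3"
      "f1 t1 = l1" "f2 t1 = - l2" "f3 t1 = - l3"
      "f1 t2 = - l1" "f2 t2 = l2" "f3 t2 = - l3"
      "f1 t3 = - l1" "f2 t3 = - l2" "f3 t3 = l3"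
  shows "norm1 {t0, t1, t2, t3} (wedge_comb f1 f2 f3 n1 n2 n3)
    = 4 * (max \<bar>of_int n2 * (l1 * l3)\<bar> \<bar>of_int n3 * (l1 * l2)\<bar>
         + max \<bar>of_int n1 * (l2 * l3)\<bar> \<bar>of_int n2 * (l1 * l3)\<bar>
         + max \<bar>of_int n1 * (l2 * l3)\<bar> \<bar>of_int n3 * (l1 * l2)\<bar>)"
proof -
  define a b c where "a = of_int n1 * (l2 * l3)" "b = of_int n2 * (l1 * l3)" "c = of_int n3 * (l1 * l2)"
  let ?W = "wedge_comb f1 f2 f3 n1 n2 n3"
  have sym: "\<bar>?W y x\<bar> = \<bar>?W x y\<bar>" for x y
    by (simp add: wedge_comb_def wedge_def abs_minus_commute algebra_simps)
  have W: "?W t0 t1 = -2 * (b + c)" "?W t0 t2 = -2 * (a - c)" "?W t0 t3 = 2 * (a + b)"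
    "?W t1 t2 = 2 * (a - b)" "?W t1 t3 = -2 * (a + c)" "?W t2 t3 = -2 * (b - c)"
    by (simp_all add: wedge_comb_def wedge_def assms(2-13) a_b_c_def algebra_simps)
  have "norm1 {t0, t1, t2, t3} ?W
      = 2 * ((\<bar>b + c\<bar> + \<bar>b - c\<bar>) + (\<bar>a + b\<bar> + \<bar>a - b\<bar>) + (\<bar>a + c\<bar> + \<bar>a - c\<bar>))"
    unfolding norm1_four[OF assms(1) sym] W abs_mult by (simp add: abs_minus_commute)
  then show ?thesis unfolding abs_add_abs_diff a_b_c_def by simp
qed

lemma sum_pairwise_max_ge:
  fixes a b c :: real
  shows "4 * (max \<bar>b\<bar> \<bar>c\<bar> + max \<bar>a\<bar> \<bar>b\<bar> + max \<bar>a\<bar> \<bar>c\<bar>) \<ge> 8 * max \<bar>a\<bar> (max \<bar>b\<bar> \<bar>c\<bar>)"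
  by (simp add: max_def)

lemma max_abs_of_int_mult_ge:
  fixes l1 l2 l3 :: real
  assumes "0 < l1" "0 < l2" "l1 \<le> l3" "l2 \<le> l3" "n1 \<noteq> 0 \<or> n2 \<noteq> 0 \<or> n3 \<noteq> 0"
  shows "l1 * l2 \<le> max \<bar>of_int n1 * (l2 * l3)\<bar> (max \<bar>of_int n2 * (l1 * l3)\<bar> \<bar>of_int n3 * (l1 * l2)\<bar>)"
proof -
  have ge: "X \<le> \<bar>of_int n * X\<bar>" if "n \<noteq> 0" "0 \<le> X" for n :: int and X :: real
  proof -
    have "1 * X \<le> of_int \<bar>n\<bar> * X"
      using that by (intro mult_right_mono) (simp_all add: of_int_1_le_iff)
    then show ?thesis using that(2) by (simp add: abs_mult)
  qed
  have le: "l1 * l2 \<le> l2 * l3" "l1 * l2 \<le> l1 * l3"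
    using assms by (simp_all add: mult_left_mono mult_right_mono)
  have pos: "0 \<le> l2 * l3" "0 \<le> l1 * l3" "0 \<le> l1 * l2"
    using assms(1-3) by simp_all
  consider "n1 \<noteq> 0" | "n2 \<noteq> 0" | "n3 \<noteq> 0" using assms(5) by blast
  then show ?thesis
  proof cases
    case 1
    then show ?thesis using order_trans[OF le(1) ge[OF 1 pos(1)]] by simp
  next
    case 2
    then show ?thesis using order_trans[OF le(2) ge[OF 2 pos(2)]] by simp
  next
    case 3
    then show ?thesis using ge[OF 3 pos(3)] by simp
  qed
qed

section \<open>Fundamental units of a real biquadratic field\<close>

locale biquadratic_units =
  fixes L K1 K2 K3 :: "real set" and u1 u2 u3 :: real
  assumes subfield: "real_subfield L"
    and galois: "galois_over_Q L"
    and klein: "aut_group L \<cong> DirProd (integer_mod_group 2) (integer_mod_group 2)"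
    and quadratic: "quadratic_subfield L K1" "quadratic_subfield L K2" "quadratic_subfield L K3"
    and fields_distinct: "K1 \<noteq> K2" "K1 \<noteq> K3" "K2 \<noteq> K3"
    and fundamental: "fundamental_unit K1 u1" "fundamental_unit K2 u2" "fundamental_unit K3 u3"
begin

lemma units_gt_1: "u1 > 1" "u2 > 1" "u3 > 1"
  using fundamental by (simp_all add: fundamental_unit_def)

lemma units_in_L: "u1 \<in> L" "u2 \<in> L" "u3 \<in> L"
  using fundamental quadratic_subfield_subset[OF quadratic(1)] quadratic_subfield_subset[OF quadratic(2)]
    quadratic_subfield_subset[OF quadratic(3)]
  by (auto simp: fundamental_unit_def int_units_def)

lemma biquadratic_field_generators:
  obtains d1 d2 d3 where "biquadratic_field L d1 d2 d3"
    "K1 = rat_span d1" "K2 = rat_span d2" "K3 = rat_span d3"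
proof -
  have "carrier (aut_group L) = field_auts L" by (simp add: aut_group_def)
  then have finite: "finite (field_auts L)" and card: "card (field_auts L) = 4"
    using iso_finite[OF klein] iso_same_card[OF klein]
    by (simp_all add: carrier_integer_mod_group card_cartesian_product)
  obtain d1 where d1: "d1 \<notin> \<rat>" "d1 * d1 \<in> \<rat>" "K1 = rat_span d1"
    by (rule quadratic_subfield_eq_rat_span[OF quadratic(1)])
  obtain d2 where d2: "d2 \<notin> \<rat>" "d2 * d2 \<in> \<rat>" "K2 = rat_span d2"
    by (rule quadratic_subfield_eq_rat_span[OF quadratic(2)])
  obtain d3 where d3: "d3 \<notin> \<rat>" "d3 * d3 \<in> \<rat>" "K3 = rat_span d3"
    by (rule quadratic_subfield_eq_rat_span[OF quadratic(3)])
  have "d1 \<noteq> 0" "d2 \<noteq> 0" "d3 \<noteq> 0" using d1 d2 d3 by auto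
  then have "d1 * d2 \<notin> \<rat>" "d1 * d3 \<notin> \<rat>" "d2 * d3 \<notin> \<rat>"
    using rat_span_eq_if_mult_Rats[of d1 d2] rat_span_eq_if_mult_Rats[of d1 d3]
      rat_span_eq_if_mult_Rats[of d2 d3] d1 d2 d3 fields_distinct by auto
  moreover have "d1 \<in> L" "d2 \<in> L" "d3 \<in> L"
    using quadratic_subfield_subset[OF quadratic(1)] quadratic_subfield_subset[OF quadratic(2)]
      quadratic_subfield_subset[OF quadratic(3)] d1(3) d2(3) d3(3) self_in_rat_span by blast+
  ultimately have "biquadratic_field L d1 d2 d3"
    using subfield galois finite card d1 d2 d3 by unfold_locales
  then show ?thesis by (rule that[OF _ d1(3) d2(3) d3(3)])
qed

lemma LOG_sign_patterns:
  obtains t0 t1 t2 t3 where "real_embeddings L = {t0, t1, t2, t3}" "distinct [t0, t1, t2, t3]"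
    "LOG L u1 t0 = ln u1" "LOG L u2 t0 = ln u2" "LOG L u3 t0 = ln u3"
    "LOG L u1 t1 = ln u1" "LOG L u2 t1 = - ln u2" "LOG L u3 t1 = - ln u3"
    "LOG L u1 t2 = - ln u1" "LOG L u2 t2 = ln u2" "LOG L u3 t2 = - ln u3"
    "LOG L u1 t3 = - ln u1" "LOG L u2 t3 = - ln u2" "LOG L u3 t3 = ln u3"
proof -
  obtain d1 d2 d3 where bq: "biquadratic_field L d1 d2 d3"
    and K: "K1 = rat_span d1" "K2 = rat_span d2" "K3 = rat_span d3"
    by (rule biquadratic_field_generators)
  interpret biquadratic_field L d1 d2 d3 by (fact bq)
  have KL: "rat_span d1 \<subseteq> L" "rat_span d2 \<subseteq> L" "rat_span d3 \<subseteq> L"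
    using quadratic_subfield_subset[OF quadratic(1)] quadratic_subfield_subset[OF quadratic(2)]
      quadratic_subfield_subset[OF quadratic(3)] K by simp_all
  obtain t0 t1 t2 t3 where A: "real_embeddings L = {t0, t1, t2, t3}" and distinct: "distinct [t0, t1, t2, t3]"
    and t: "t0 d1 = d1" "t0 d2 = d2" "t0 d3 = d3" "t1 d1 = d1" "t1 d2 = - d2" "t1 d3 = - d3"
      "t2 d1 = - d1" "t2 d2 = d2" "t2 d3 = - d3" "t3 d1 = - d1" "t3 d2 = - d2" "t3 d3 = d3"
    by (rule real_embeddings_sign_patterns)
  have emb: "t0 \<in> real_embeddings L" "t1 \<in> real_embeddings L" "t2 \<in> real_embeddings L"
    "t3 \<in> real_embeddings L"
    unfolding A by simp_all
  note LOG1 = LOG_fundamental_unit[OF subfield _ irrational(1) squares(1) KL(1) fundamental(1)[unfolded K(1)]]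
    and LOG2 = LOG_fundamental_unit[OF subfield _ irrational(2) squares(2) KL(2) fundamental(2)[unfolded K(2)]]
    and LOG3 = LOG_fundamental_unit[OF subfield _ irrational(3) squares(3) KL(3) fundamental(3)[unfolded K(3)]]
  show ?thesis
    by (rule that[OF A distinct LOG1(1)[OF emb(1) t(1)] LOG2(1)[OF emb(1) t(2)] LOG3(1)[OF emb(1) t(3)]
          LOG1(1)[OF emb(2) t(4)] LOG2(2)[OF emb(2) t(5)] LOG3(2)[OF emb(2) t(6)]
          LOG1(2)[OF emb(3) t(7)] LOG2(1)[OF emb(3) t(8)] LOG3(2)[OF emb(3) t(9)]
          LOG1(2)[OF emb(4) t(10)] LOG2(2)[OF emb(4) t(11)] LOG3(1)[OF emb(4) t(12)]])
qed

lemma norm1_wedge_comb: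
  "norm1 (real_embeddings L) (wedge_comb (LOG L u1) (LOG L u2) (LOG L u3) n1 n2 n3)
    = 4 * (max \<bar>of_int n2 * (ln u1 * ln u3)\<bar> \<bar>of_int n3 * (ln u1 * ln u2)\<bar>
         + max \<bar>of_int n1 * (ln u2 * ln u3)\<bar> \<bar>of_int n2 * (ln u1 * ln u3)\<bar>
         + max \<bar>of_int n1 * (ln u2 * ln u3)\<bar> \<bar>of_int n3 * (ln u1 * ln u2)\<bar>)"
proof -
  obtain t0 t1 t2 t3 where A: "real_embeddings L = {t0, t1, t2, t3}"
    and patterns: "distinct [t0, t1, t2, t3]"
    "LOG L u1 t0 = ln u1" "LOG L u2 t0 = ln u2" "LOG L u3 t0 = ln u3"
    "LOG L u1 t1 = ln u1" "LOG L u2 t1 = - ln u2" "LOG L u3 t1 = - ln u3"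
    "LOG L u1 t2 = - ln u1" "LOG L u2 t2 = ln u2" "LOG L u3 t2 = - ln u3"
    "LOG L u1 t3 = - ln u1" "LOG L u2 t3 = - ln u2" "LOG L u3 t3 = ln u3"
    by (rule LOG_sign_patterns)
  show ?thesis
    unfolding A by (rule norm1_wedge_comb_sign_patterns[where ?f1.0 = "LOG L u1" and ?f2.0 = "LOG L u2"
          and ?f3.0 = "LOG L u3", OF patterns])
qed

lemma LOG_unit_monomial:
  "LOG L (u1 powi m1 * u2 powi m2 * u3 powi m3)
    = (\<lambda>\<tau>. of_int m1 * LOG L u1 \<tau> + of_int m2 * LOG L u2 \<tau> + of_int m3 * LOG L u3 \<tau>)"
proof -
  have "u1 powi m1 \<in> L" "u2 powi m2 \<in> L" "u3 powi m3 \<in> L" "u1 powi m1 * u2 powi m2 \<in> L"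
    using units_in_L by (auto intro: real_subfield_powi[OF subfield] real_subfield_mult[OF subfield])
  moreover have "u1 \<noteq> 0" "u2 \<noteq> 0" "u3 \<noteq> 0" using units_gt_1 by auto
  ultimately show ?thesis
    using units_in_L by (simp add: LOG_mult[OF subfield] LOG_powi[OF subfield])
qed

lemma wedge2_LOG_units:
  assumes "w \<in> wedge2_LOG L {u1 powi m1 * u2 powi m2 * u3 powi m3 | m1 m2 m3 :: int. True}"
  obtains n1 n2 n3 where "w = wedge_comb (LOG L u1) (LOG L u2) (LOG L u3) n1 n2 n3"
  using wedge2_LOG_eq_wedge_comb[OF _ assms] LOG_unit_monomial by blast

end

theorem mainTheorem5:
  fixes L K1 K2 K3 :: "real set" and u1 u2 u3 :: real
  assumes "real_subfield L"
    and "galois_over_Q L"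
    and "aut_group L \<cong> DirProd (integer_mod_group 2) (integer_mod_group 2)"
    and "quadratic_subfield L K1" and "quadratic_subfield L K2" and "quadratic_subfield L K3"
    and "K1 \<noteq> K2" and "K1 \<noteq> K3" and "K2 \<noteq> K3"
    and "fundamental_unit K1 u1" and "fundamental_unit K2 u2" and "fundamental_unit K3 u3"
    and "u1 < u2" and "u2 < u3"
  defines "E \<equiv> {u1 powi m1 * u2 powi m2 * u3 powi m3 | m1 m2 m3 :: int. True}"
    and "X1 \<equiv> ln u2 * ln u3" and "X2 \<equiv> ln u1 * ln u3" and "X3 \<equiv> ln u1 * ln u2"
    and "A \<equiv> real_embeddings L"
  shows "(\<forall>n1 n2 n3 :: int.
           let w = (\<lambda>v x. of_int n1 * wedge (LOG L u2) (LOG L u3) v x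
                        + of_int n2 * wedge (LOG L u1) (LOG L u3) v x
                        + of_int n3 * wedge (LOG L u1) (LOG L u2) v x)
           in norm1 A w = 4 * ((max \<bar>of_int n2 * X2\<bar> \<bar>of_int n3 * X3\<bar>) + (max \<bar>of_int n1 * X1\<bar> \<bar>of_int n2 * X2\<bar>)
                                + (max \<bar>of_int n1 * X1\<bar> \<bar>of_int n3 * X3\<bar>))
            \<and> 4 * ((max \<bar>of_int n2 * X2\<bar> \<bar>of_int n3 * X3\<bar>) + (max \<bar>of_int n1 * X1\<bar> \<bar>of_int n2 * X2\<bar>)
                                + (max \<bar>of_int n1 * X1\<bar> \<bar>of_int n3 * X3\<bar>))
               \<ge> 8 * max \<bar>of_int n1 * X1\<bar> ((max \<bar>of_int n2 * X2\<bar> \<bar>of_int n3 * X3\<bar>)))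
       \<and> (\<forall>w \<in> wedge2_LOG L E. w \<noteq> (\<lambda>v x. 0) \<longrightarrow> norm1 A w \<ge> 8 * ln u1 * ln u2)"
proof -
  interpret biquadratic_units L K1 K2 K3 u1 u2 u3
    using assms(1-12) by unfold_locales
  have norm: "norm1 A (wedge_comb (LOG L u1) (LOG L u2) (LOG L u3) n1 n2 n3)
      = 4 * (max \<bar>of_int n2 * X2\<bar> \<bar>of_int n3 * X3\<bar> + max \<bar>of_int n1 * X1\<bar> \<bar>of_int n2 * X2\<bar>
           + max \<bar>of_int n1 * X1\<bar> \<bar>of_int n3 * X3\<bar>)" for n1 n2 n3
    unfolding assms(16-19) by (rule norm1_wedge_comb)
  have logs: "0 < ln u1" "0 < ln u2" "ln u1 \<le> ln u3" "ln u2 \<le> ln u3"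
    using units_gt_1 assms(13,14) by auto
  show ?thesis
    unfolding Let_def wedge_comb_def[symmetric]
  proof (intro conjI allI ballI impI norm sum_pairwise_max_ge)
    fix w assume w: "w \<in> wedge2_LOG L E" "w \<noteq> (\<lambda>v x. 0)"
    obtain n1 n2 n3 where w_eq: "w = wedge_comb (LOG L u1) (LOG L u2) (LOG L u3) n1 n2 n3"
      using w(1) unfolding assms(15) by (rule wedge2_LOG_units)
    with w(2) have "n1 \<noteq> 0 \<or> n2 \<noteq> 0 \<or> n3 \<noteq> 0" by auto
    then have "ln u1 * ln u2 \<le> max \<bar>of_int n1 * X1\<bar> (max \<bar>of_int n2 * X2\<bar> \<bar>of_int n3 * X3\<bar>)"
      unfolding assms(16-18) by (rule max_abs_of_int_mult_ge[OF logs])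
    then show "8 * ln u1 * ln u2 \<le> norm1 A w"
      using sum_pairwise_max_ge[of "of_int n1 * X1" "of_int n2 * X2" "of_int n3 * X3"]
      unfolding w_eq norm by linarith
  qed
qed

end
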